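(* Let $(X,\mathcal{B},\mu)$ be a standard probability space, $r\geq2$ an integer, and $K$ a subset of $\mathfrak{P}_r$. The following are equivalent: (1) $K$ is precompact in $(\mathfrak{P}_r,\rho)$; (2) $K$ has bounded mean complexity; (3) every sequence in $K$ has bounded mean complexity.
   Context: $\mathfrak{P}_r$ is the set of finite measurable partitions of $X$ with at most $r$ atoms (identified mod $0$). $H_\mu(\alpha|\beta)=\sum_{B\in\beta}\mu(B)\sum_{A\in\alpha}-\mu(A|B)\log\mu(A|B)$, $\mu(A|B)=\mu(A\cap B)/\mu(B)$ ($0$ if $\mu(B)=0$), $0\log0=0$; Rokhlin metric $\rho(\alpha,\beta)=H_\mu(\alpha|\beta)+H_\mu(\beta|\alpha)$. For a finite nonempty $E\subset\mathfrak{P}_r$ and $x,y\in X$, $H_E(x,y)=\frac1{|E|}|\{\alpha\in E\colon x,y\text{ lie in different atoms of }\alpha\}|$; $B_{H_E}(x,\varepsilon)=\{y\colon H_E(x,y)<\varepsilon\}$; $\mathcal{C}(E,\varepsilon)=\min\{|D|\colon D\subset X\text{ finite},\ \mu(\bigcup_{x\in D}B_{H_E}(x,\varepsilon))>1-\varepsilon\}$. $K$ has bounded mean complexity if for every $\varepsilon>0$ there is $C\in\mathbb{N}$ with $\mathcal{C}(E,\varepsilon)\le C$ for all finite nonempty $E\subset K$. A sequence $(\alpha_i)_{i\ge1}$ in $\mathfrak{P}_r$ has bounded mean complexity if for every $\varepsilon>0$ there is $C\in\mathbb{N}$ with $\mathcal{C}(\{\alpha_1,\dots,\alpha_n\},\varepsilon)\le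 C$ for all $n\in\mathbb{N}$. *)

theory Defs
  imports "HOL-Probability.Probability"
begin

definition standard_prob_space :: "'a::polish_space measure \<Rightarrow> bool" where
  "standard_prob_space M \<longleftrightarrow> prob_space M \<and> space M = UNIV \<and> sets M = sets borel"

text \<open>Finite measurable partitions of X with at most r atoms (representatives; the
  identification mod 0 is handled via the Rokhlin pseudometric).  A partition is the
  finite set of its atoms.\<close>
definition parts :: "'a measure \<Rightarrow> nat \<Rightarrow> 'a set set set" where
  "parts M r = {\<alpha>. finite \<alpha> \<and> card \<alpha> \<le> r \<and> \<alpha> \<subseteq> sets M \<and> \<Union>\<alpha> = space M
      \<and> (\<forall>A\<in>\<alpha>. \<forall>B\<in>\<alpha>. A \<noteq> B \<longrightarrow> A \<inter> B = {})}"

definition plogp :: "real \<Rightarrow> real" where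
  "plogp x = (if x = 0 then 0 else x * ln x)"

definition cond_meas :: "'a measure \<Rightarrow> 'a set \<Rightarrow> 'a set \<Rightarrow> real" where
  "cond_meas M A B = (if measure M B = 0 then 0 else measure M (A \<inter> B) / measure M B)"

definition cond_entropy :: "'a measure \<Rightarrow> 'a set set \<Rightarrow> 'a set set \<Rightarrow> real" where
  "cond_entropy M \<alpha> \<beta> = (\<Sum>B\<in>\<beta>. measure M B * (\<Sum>A\<in>\<alpha>. - plogp (cond_meas M A B)))"

definition rokhlin :: "'a measure \<Rightarrow> 'a set set \<Rightarrow> 'a set set \<Rightarrow> real" where
  "rokhlin M \<alpha> \<beta> = cond_entropy M \<alpha> \<beta> + cond_entropy M \<beta> \<alpha>"

definition precompact_parts :: "'a measure \<Rightarrow> nat \<Rightarrow> 'a set set set \<Rightarrow> bool" where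
  "precompact_parts M r K \<longleftrightarrow>
     (\<forall>s::nat \<Rightarrow> 'a set set. (\<forall>n. s n \<in> K) \<longrightarrow>
        (\<exists>\<phi> \<beta>. strict_mono \<phi> \<and> \<beta> \<in> parts M r \<and> (\<lambda>n. rokhlin M (s (\<phi> n)) \<beta>) \<longlonglongrightarrow> 0))"

definition H_E :: "'a set set set \<Rightarrow> 'a \<Rightarrow> 'a \<Rightarrow> real" where
  "H_E E x y = real (card {\<alpha>\<in>E. \<not> (\<exists>A\<in>\<alpha>. x \<in> A \<and> y \<in> A)}) / real (card E)"

definition H_ball :: "'a measure \<Rightarrow> 'a set set set \<Rightarrow> 'a \<Rightarrow> real \<Rightarrow> 'a set" where
  "H_ball M E x \<epsilon> = {y \<in> space M. H_E E x y < \<epsilon>}"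

definition mean_complexity :: "'a measure \<Rightarrow> 'a set set set \<Rightarrow> real \<Rightarrow> nat" where
  "mean_complexity M E \<epsilon> = (LEAST n. \<exists>D. finite D \<and> D \<subseteq> space M \<and> card D = n \<and>
       measure M (\<Union>x\<in>D. H_ball M E x \<epsilon>) > 1 - \<epsilon>)"

definition bounded_mean_complexity :: "'a measure \<Rightarrow> 'a set set set \<Rightarrow> bool" where
  "bounded_mean_complexity M K \<longleftrightarrow>
     (\<forall>\<epsilon>>0. \<exists>C::nat. \<forall>E. finite E \<and> E \<noteq> {} \<and> E \<subseteq> K \<longrightarrow> mean_complexity M E \<epsilon> \<le> C)"

definition seq_bounded_mean_complexity :: "'a measure \<Rightarrow> (nat \<Rightarrow> 'a set set) \<Rightarrow> bool" where
  "seq_bounded_mean_complexity M s \<longleftrightarrow>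
     (\<forall>\<epsilon>>0. \<exists>C::nat. \<forall>n\<ge>1. mean_complexity M (s ` {1..n}) \<epsilon> \<le> C)"

end

theory Submission
  imports Defs "HOL-Library.Ramsey" "HOL-Library.Diagonal_Subsequence"
begin

text \<open>
  Say that \<open>\<alpha>\<close> and \<open>\<beta>\<close> agree mod \<open>d\<close> if they induce the same equivalence relation
  outside a set of measure at most \<open>d\<close>. For partitions with at most \<open>r\<close> atoms this is
  quantitatively equivalent to Rokhlin-closeness: \<open>\<beta>\<close> refines \<open>\<alpha>\<close> outside a set of measure
  at most \<open>H(\<alpha>|\<beta>)\<close>, and agreement mod \<open>\<eta>\<close> gives \<open>\<rho> \<le> 2 r\<^sup>2 (\<eta> + 2 \<surd>\<eta>)\<close>.

  (1) \<open>\<Longrightarrow>\<close> (2): take a finite \<open>\<epsilon>\<^sup>2/4\<close>-net \<open>F\<close> of \<open>K\<close>. By Markov's inequality, outside a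
  set of measure \<open>\<epsilon>/2\<close> a point is exceptional for fewer than an \<open>\<epsilon>/2\<close>-fraction of the members
  of \<open>E\<close>, so two such points lying in the same atoms of all members of \<open>F\<close> are \<open>H\<^sub>E\<close>-close;
  hence \<open>2^|\<Union>F|\<close> centres suffice. (2) \<open>\<Longrightarrow>\<close> (3) is trivial.

  (3) \<open>\<Longrightarrow>\<close> (1): if at most \<open>C\<close> centres \<open>\<epsilon>\<close>-cover \<open>E\<close> in mean and \<open>|E| > 2 \<cdot> 2^(C\<^sup>2)\<close>, two
  members of \<open>E\<close> induce the same relation on the centres and therefore agree mod \<open>8\<epsilon>\<close>.
  Ramsey's theorem and a diagonal argument turn this into a subsequence that is Cauchy for
  agreement, and such a sequence converges in \<open>parts M r\<close>: the limit is read off on the sets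
  where the sequence has stabilised.
\<close>

section \<open>Agreement off small sets\<close>

definition same_atom :: "'a set set \<Rightarrow> 'a \<Rightarrow> 'a \<Rightarrow> bool" where
  "same_atom \<alpha> x y \<longleftrightarrow> (\<exists>A\<in>\<alpha>. x \<in> A \<and> y \<in> A)"

definition atom_of :: "'a set set \<Rightarrow> 'a \<Rightarrow> 'a set" where
  "atom_of \<alpha> x = \<Union>{A\<in>\<alpha>. x \<in> A}"

definition agree_mod :: "'a measure \<Rightarrow> 'a set set \<Rightarrow> 'a set set \<Rightarrow> real \<Rightarrow> bool" where
  "agree_mod M \<alpha> \<beta> d \<longleftrightarrow> (\<exists>Z\<in>sets M. measure M Z \<le> d \<and>
     (\<forall>x\<in>space M - Z. \<forall>y\<in>space M - Z. same_atom \<alpha> x y \<longleftrightarrow> same_atom \<beta> x y))"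

lemma partsD:
  assumes "\<alpha> \<in> parts M r"
  shows "finite \<alpha>" "card \<alpha> \<le> r" "\<alpha> \<subseteq> sets M" "\<Union>\<alpha> = space M"
    "\<And>A B. A \<in> \<alpha> \<Longrightarrow> B \<in> \<alpha> \<Longrightarrow> A \<noteq> B \<Longrightarrow> A \<inter> B = {}"
  using assms unfolding parts_def by auto

lemma same_atom_sym: "same_atom \<alpha> x y \<longleftrightarrow> same_atom \<alpha> y x"
  unfolding same_atom_def by blast

lemma same_atom_refl: "\<alpha> \<in> parts M r \<Longrightarrow> x \<in> space M \<Longrightarrow> same_atom \<alpha> x x"
  using partsD(4)[of \<alpha> M r] unfolding same_atom_def by blast

lemma same_atom_trans:
  "\<alpha> \<in> parts M r \<Longrightarrow> same_atom \<alpha> x y \<Longrightarrow> same_atom \<alpha> y z \<Longrightarrow> same_atom \<alpha> x z"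
  using partsD(5)[of \<alpha> M r] unfolding same_atom_def by blast

lemma same_atom_cong:
  assumes "\<alpha> \<in> parts M r" "same_atom \<alpha> u y" "same_atom \<alpha> v z"
  shows "same_atom \<alpha> y z \<longleftrightarrow> same_atom \<alpha> u v"
  using assms same_atom_trans[OF assms(1)] same_atom_sym by metis

lemma same_atom_mem:
  "\<alpha> \<in> parts M r \<Longrightarrow> A \<in> \<alpha> \<Longrightarrow> x \<in> A \<Longrightarrow> same_atom \<alpha> x y \<Longrightarrow> y \<in> A"
  using partsD(5)[of \<alpha> M r] unfolding same_atom_def by blast

lemma atom_of_iff: "y \<in> atom_of \<alpha> x \<longleftrightarrow> same_atom \<alpha> x y"
  unfolding atom_of_def same_atom_def by blast

lemma atom_of_in_sets: "\<alpha> \<in> parts M r \<Longrightarrow> atom_of \<alpha> x \<in> sets M"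
  unfolding atom_of_def using partsD(1,3)[of \<alpha> M r] by (intro sets.finite_Union) auto

lemma card_le_if_separated:
  assumes \<alpha>: "\<alpha> \<in> parts M r" and P: "P \<subseteq> space M"
    and sep: "\<And>x y. x \<in> P \<Longrightarrow> y \<in> P \<Longrightarrow> same_atom \<alpha> x y \<Longrightarrow> x = y"
  shows "finite P" "card P \<le> r"
proof -
  have "inj_on (atom_of \<alpha>) P"
    using sep by (intro inj_onI) (metis atom_of_iff same_atom_refl[OF \<alpha>] P subsetD)
  moreover have "atom_of \<alpha> ` P \<subseteq> \<alpha>"
  proof
    fix A assume "A \<in> atom_of \<alpha> ` P"
    then obtain x where x: "x \<in> P" "A = atom_of \<alpha> x" by blast
    then obtain B where B: "B \<in> \<alpha>" "x \<in> B" using partsD(4)[OF \<alpha>] P by blast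
    then have "{C\<in>\<alpha>. x \<in> C} = {B}" using partsD(5)[OF \<alpha>] by blast
    then show "A \<in> \<alpha>" using x B unfolding atom_of_def by simp
  qed
  ultimately show "finite P" "card P \<le> r"
    using partsD(1,2)[OF \<alpha>] inj_on_finite card_inj_on_le le_trans by metis+
qed

lemma agree_mod_refl: "d \<ge> 0 \<Longrightarrow> agree_mod M \<alpha> \<alpha> d"
  unfolding agree_mod_def by (rule bexI[of _ "{}"]) auto

lemma agree_mod_sym: "agree_mod M \<alpha> \<beta> d \<Longrightarrow> agree_mod M \<beta> \<alpha> d"
  unfolding agree_mod_def by metis

lemma agree_mod_mono: "agree_mod M \<alpha> \<beta> d \<Longrightarrow> d \<le> d' \<Longrightarrow> agree_mod M \<alpha> \<beta> d'"
  unfolding agree_mod_def by (meson order_trans)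

lemma agree_mod_trans:
  assumes "agree_mod M \<alpha> \<beta> d" "agree_mod M \<beta> \<gamma> e"
  shows "agree_mod M \<alpha> \<gamma> (d + e)"
proof -
  obtain Y where Y: "Y \<in> sets M" "measure M Y \<le> d"
    "\<forall>x\<in>space M - Y. \<forall>y\<in>space M - Y. same_atom \<alpha> x y \<longleftrightarrow> same_atom \<beta> x y"
    using assms(1) unfolding agree_mod_def by blast
  obtain Z where Z: "Z \<in> sets M" "measure M Z \<le> e"
    "\<forall>x\<in>space M - Z. \<forall>y\<in>space M - Z. same_atom \<beta> x y \<longleftrightarrow> same_atom \<gamma> x y"
    using assms(2) unfolding agree_mod_def by blast
  have "measure M (Y \<union> Z) \<le> d + e"
    using measure_Un_le[OF Y(1) Z(1)] Y(2) Z(2) by linarith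
  then show ?thesis
    unfolding agree_mod_def using Y Z by (intro bexI[of _ "Y \<union> Z"]) auto
qed

section \<open>Conditional entropy versus agreement\<close>

lemma minus_plogp_nonneg: "0 \<le> p \<Longrightarrow> p \<le> 1 \<Longrightarrow> 0 \<le> - plogp p"
  unfolding plogp_def by (auto intro!: mult_nonneg_nonpos)

lemma minus_plogp_ge:
  assumes "0 \<le> p" "p \<le> m" "0 < m"
  shows "- p * ln m \<le> - plogp p"
proof (cases "p = 0")
  case False
  then have "ln p \<le> ln m" using assms by simp
  then show ?thesis using assms unfolding plogp_def by (simp add: mult_left_mono)
qed (simp add: plogp_def)

lemma minus_plogp_le_one_minus:
  assumes "0 \<le> p" "p \<le> 1"
  shows "- plogp p \<le> 1 - p"
proof (cases "p = 0")
  case False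
  then have p: "p > 0" using assms by simp
  have "p * ln (1 / p) \<le> p * (1 / p - 1)"
    using p by (intro mult_left_mono ln_le_minus_one) auto
  then show ?thesis using p unfolding plogp_def by (simp add: ln_div right_diff_distrib)
qed (simp add: plogp_def)

lemma minus_plogp_le_sqrt:
  assumes "0 \<le> p" "p \<le> 1"
  shows "- plogp p \<le> 2 * sqrt p"
proof (cases "p = 0")
  case False
  then have p: "p > 0" using assms by simp
  have "ln (1 / sqrt p) \<le> 1 / sqrt p - 1" using p by (intro ln_le_minus_one) simp
  moreover have "ln p = 2 * ln (sqrt p)" using p by (simp add: ln_sqrt)
  ultimately have "- ln p \<le> 2 / sqrt p" using p by (simp add: ln_div)
  then have "p * (- ln p) \<le> p * (2 / sqrt p)" using p by (intro mult_left_mono) auto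
  also have "\<dots> = 2 * sqrt p" using p by (simp add: field_simps real_sqrt_mult[symmetric])
  finally show ?thesis using p unfolding plogp_def by simp
qed (simp add: plogp_def)

lemma minus_plogp_le_if_near_0_or_1:
  assumes "0 \<le> p" "p \<le> 1" "p \<le> s \<or> 1 - p \<le> s"
  shows "- plogp p \<le> s + 2 * sqrt s"
  using assms minus_plogp_le_sqrt[OF assms(1,2)] minus_plogp_le_one_minus[OF assms(1,2)]
    real_sqrt_le_mono[of p s] real_sqrt_ge_zero[of s] by linarith

context prob_space
begin

lemma cond_meas_bounds: "0 \<le> cond_meas M A B" "cond_meas M A B \<le> 1"
proof -
  show "0 \<le> cond_meas M A B" unfolding cond_meas_def by simp
  show "cond_meas M A B \<le> 1"
  proof (cases "prob B = 0")
    case False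
    then have "B \<in> events" using measure_notin_sets by blast
    then have "prob (A \<inter> B) \<le> prob B" by (intro finite_measure_mono) auto
    then show ?thesis unfolding cond_meas_def using False
      by (simp add: divide_le_eq_1 order_less_le)
  qed (simp add: cond_meas_def)
qed

lemma cond_entropy_nonneg: "0 \<le> cond_entropy M \<alpha> \<beta>"
  unfolding cond_entropy_def
  by (intro sum_nonneg mult_nonneg_nonneg measure_nonneg minus_plogp_nonneg cond_meas_bounds)

lemma rokhlin_nonneg: "0 \<le> rokhlin M \<alpha> \<beta>"
  unfolding rokhlin_def using cond_entropy_nonneg by (simp add: add_nonneg_nonneg)

lemma sum_prob_Int_parts:
  assumes "\<alpha> \<in> parts M r" "B \<in> events"
  shows "(\<Sum>A\<in>\<alpha>. prob (A \<inter> B)) = prob B"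
proof -
  have "prob (\<Union>A\<in>\<alpha>. A \<inter> B) = (\<Sum>A\<in>\<alpha>. prob (A \<inter> B))"
    using partsD[OF assms(1)] assms(2)
    by (intro finite_measure_finite_Union) (auto simp: disjoint_family_on_def, blast+)
  moreover have "(\<Union>A\<in>\<alpha>. A \<inter> B) = B"
    using partsD(4)[OF assms(1)] sets.sets_into_space[OF assms(2)] by blast
  ultimately show ?thesis by simp
qed

text \<open>Gibbs' inequality: the entropy of a distribution is at least \<open>- ln\<close> of its largest
  weight, hence at least one minus that weight.\<close>
lemma prob_Diff_heaviest_atom_le:
  assumes \<alpha>: "\<alpha> \<in> parts M r" and B: "B \<in> events" and A0: "A0 \<in> \<alpha>"
    and heaviest: "\<And>A. A \<in> \<alpha> \<Longrightarrow> prob (A \<inter> B) \<le> prob (A0 \<inter> B)"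
  shows "prob (B - A0) \<le> prob B * (\<Sum>A\<in>\<alpha>. - plogp (cond_meas M A B))"
proof (cases "prob B = 0")
  case True
  moreover have "prob (B - A0) \<le> prob B" using B by (intro finite_measure_mono) auto
  ultimately show ?thesis by simp
next
  case False
  then have pB: "prob B > 0" using measure_nonneg[of M B] by linarith
  define p where "p A = cond_meas M A B" for A
  define m where "m = p A0"
  have p0: "0 \<le> p A" for A unfolding p_def by (rule cond_meas_bounds)
  have pm: "p A \<le> m" if "A \<in> \<alpha>" for A
    unfolding m_def p_def cond_meas_def using heaviest[OF that] False
    by (simp add: divide_right_mono)
  have sum1: "(\<Sum>A\<in>\<alpha>. p A) = 1"
    unfolding p_def cond_meas_def using sum_prob_Int_parts[OF \<alpha> B] False
    by (simp add: sum_divide_distrib[symmetric])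
  have m0: "m > 0"
  proof (rule ccontr)
    assume "\<not> m > 0"
    then have "\<forall>A\<in>\<alpha>. p A = 0" using pm p0 by (meson antisym not_less order.trans)
    then show False using sum1 by simp
  qed
  have "1 - m \<le> - ln m" using ln_le_minus_one[OF m0] by simp
  also have "\<dots> = (\<Sum>A\<in>\<alpha>. - p A * ln m)"
    using sum1 by (simp add: sum_negf sum_distrib_right[symmetric])
  also have "\<dots> \<le> (\<Sum>A\<in>\<alpha>. - plogp (p A))"
    by (intro sum_mono minus_plogp_ge p0 pm m0)
  finally have ge: "1 - m \<le> (\<Sum>A\<in>\<alpha>. - plogp (p A))" .
  have "B - A0 = B - (A0 \<inter> B)" by blast
  then have "prob (B - A0) = prob B - prob (A0 \<inter> B)"
    using B A0 partsD(3)[OF \<alpha>] by (auto simp: finite_measure_Diff Int_commute)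
  also have "\<dots> = prob B * (1 - m)"
    unfolding m_def p_def cond_meas_def using False by (simp add: field_simps)
  also have "\<dots> \<le> prob B * (\<Sum>A\<in>\<alpha>. - plogp (p A))"
    using ge pB by (intro mult_left_mono) auto
  finally show ?thesis unfolding p_def .
qed

lemma refines_outside_cond_entropy:
  assumes \<alpha>: "\<alpha> \<in> parts M r" and \<beta>: "\<beta> \<in> parts M r"
  obtains Z where "Z \<in> events" "prob Z \<le> cond_entropy M \<alpha> \<beta>"
    "\<And>x y. x \<in> space M - Z \<Longrightarrow> y \<in> space M - Z \<Longrightarrow> same_atom \<beta> x y \<Longrightarrow> same_atom \<alpha> x y"
proof -
  have "\<alpha> \<noteq> {}" using partsD(4)[OF \<alpha>] not_empty by auto
  then have "\<exists>A0\<in>\<alpha>. \<forall>A\<in>\<alpha>. prob (A \<inter> B) \<le> prob (A0 \<inter> B)" for B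
    using ex_is_arg_min_if_finite[OF partsD(1)[OF \<alpha>], of "\<lambda>A. - prob (A \<inter> B)"]
    by (auto simp: is_arg_min_linorder)
  then obtain f where f: "\<And>B. f B \<in> \<alpha>" "\<And>B A. A \<in> \<alpha> \<Longrightarrow> prob (A \<inter> B) \<le> prob (f B \<inter> B)"
    by metis
  define Z where "Z = (\<Union>B\<in>\<beta>. B - f B)"
  have sets: "B - f B \<in> events" if "B \<in> \<beta>" for B
    using that f(1) partsD(3)[OF \<alpha>] partsD(3)[OF \<beta>] by blast
  then have "Z \<in> events" unfolding Z_def using partsD(1)[OF \<beta>] by blast
  moreover have "prob Z \<le> cond_entropy M \<alpha> \<beta>"
  proof -
    have "prob Z \<le> (\<Sum>B\<in>\<beta>. prob (B - f B))"
      unfolding Z_def using partsD(1)[OF \<beta>] sets by (intro measure_UNION_le) auto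
    also have "\<dots> \<le> cond_entropy M \<alpha> \<beta>"
      unfolding cond_entropy_def using f partsD(3)[OF \<beta>]
      by (intro sum_mono prob_Diff_heaviest_atom_le[OF \<alpha>]) auto
    finally show ?thesis .
  qed
  moreover have "same_atom \<alpha> x y"
    if "x \<in> space M - Z" "y \<in> space M - Z" "same_atom \<beta> x y" for x y
    using that f(1) unfolding Z_def same_atom_def by blast
  ultimately show ?thesis using that by blast
qed

lemma agree_mod_rokhlin:
  assumes "\<alpha> \<in> parts M r" "\<beta> \<in> parts M r"
  shows "agree_mod M \<alpha> \<beta> (rokhlin M \<alpha> \<beta>)"
proof -
  obtain Y where Y: "Y \<in> events" "prob Y \<le> cond_entropy M \<alpha> \<beta>"
    "\<And>x y. x \<in> space M - Y \<Longrightarrow> y \<in> space M - Y \<Longrightarrow> same_atom \<beta> x y \<Longrightarrow> same_atom \<alpha> x y"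
    using refines_outside_cond_entropy[OF assms] by blast
  obtain Z where Z: "Z \<in> events" "prob Z \<le> cond_entropy M \<beta> \<alpha>"
    "\<And>x y. x \<in> space M - Z \<Longrightarrow> y \<in> space M - Z \<Longrightarrow> same_atom \<alpha> x y \<Longrightarrow> same_atom \<beta> x y"
    using refines_outside_cond_entropy[OF assms(2,1)] by blast
  have "prob (Y \<union> Z) \<le> rokhlin M \<alpha> \<beta>"
    using measure_Un_le[OF Y(1) Z(1)] Y(2) Z(2) unfolding rokhlin_def by linarith
  then show ?thesis unfolding agree_mod_def using Y Z by (intro bexI[of _ "Y \<union> Z"]) auto
qed

lemma cond_entropy_term_le_if_almost_in_atom:
  assumes \<alpha>: "\<alpha> \<in> parts M r" and B: "B \<in> events" and Z: "Z \<in> events"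
    and A0: "A0 \<in> \<alpha>" "B - Z \<subseteq> A0"
  shows "prob B * (\<Sum>A\<in>\<alpha>. - plogp (cond_meas M A B))
           \<le> r * (prob (B \<inter> Z) + 2 * sqrt (prob (B \<inter> Z)))"
proof (cases "prob B = 0")
  case False
  then have pB: "prob B > 0" using measure_nonneg[of M B] by linarith
  define q where "q = prob (B \<inter> Z)"
  define s where "s = q / prob B"
  have near: "cond_meas M A B \<le> s \<or> 1 - cond_meas M A B \<le> s" if A: "A \<in> \<alpha>" for A
  proof (cases "A = A0")
    case True
    have "1 - cond_meas M A0 B = (prob B - prob (A0 \<inter> B)) / prob B"
      using pB by (simp add: cond_meas_def diff_divide_distrib)
    also have "prob B - prob (A0 \<inter> B) = prob (B - A0)"
      using A0(1) partsD(3)[OF \<alpha>] B by (metis Diff_Int2 finite_measure_Diff' inf_commute subsetD)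
    also have "\<dots> \<le> q" unfolding q_def using A0(2) B Z by (intro finite_measure_mono) auto
    finally show ?thesis
      using True pB unfolding s_def by (simp add: divide_right_mono)
  next
    case False
    then have "A \<inter> B \<subseteq> B \<inter> Z" using A0 A partsD(5)[OF \<alpha>] by blast
    then have "prob (A \<inter> B) \<le> q" unfolding q_def using B Z by (intro finite_measure_mono) auto
    then show ?thesis unfolding cond_meas_def s_def using pB by (simp add: divide_right_mono)
  qed
  have s0: "0 \<le> s" unfolding s_def q_def by simp
  have "(\<Sum>A\<in>\<alpha>. - plogp (cond_meas M A B)) \<le> (\<Sum>A\<in>\<alpha>. s + 2 * sqrt s)"
    by (intro sum_mono minus_plogp_le_if_near_0_or_1 cond_meas_bounds near)
  also have "\<dots> \<le> r * (s + 2 * sqrt s)"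
    using partsD(2)[OF \<alpha>] s0 by (simp add: mult_right_mono)
  finally have "prob B * (\<Sum>A\<in>\<alpha>. - plogp (cond_meas M A B)) \<le> prob B * (r * (s + 2 * sqrt s))"
    using pB by (intro mult_left_mono) auto
  also have "\<dots> = r * (q + 2 * sqrt (prob B * q))"
    unfolding s_def using pB
    by (simp add: field_simps real_sqrt_divide real_sqrt_mult)
  also have "\<dots> \<le> r * (q + 2 * sqrt q)"
    using prob_le_1[of B] by (intro mult_left_mono add_left_mono real_sqrt_le_mono)
      (auto simp: q_def mult_left_le_one_le)
  finally show ?thesis unfolding q_def .
qed simp

lemma cond_entropy_le_if_refines_outside:
  assumes \<alpha>: "\<alpha> \<in> parts M r" and \<beta>: "\<beta> \<in> parts M r" and Z: "Z \<in> events" "prob Z \<le> \<eta>"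
    and refines: "\<And>x y. x \<in> space M - Z \<Longrightarrow> y \<in> space M - Z \<Longrightarrow> same_atom \<beta> x y \<Longrightarrow> same_atom \<alpha> x y"
  shows "cond_entropy M \<alpha> \<beta> \<le> r * r * (\<eta> + 2 * sqrt \<eta>)"
proof -
  have term_le: "prob B * (\<Sum>A\<in>\<alpha>. - plogp (cond_meas M A B)) \<le> r * (\<eta> + 2 * sqrt \<eta>)"
    if B: "B \<in> \<beta>" for B
  proof -
    have Bs: "B \<in> events" "B \<subseteq> space M" using B partsD(3,4)[OF \<beta>] by auto
    obtain A0 where A0: "A0 \<in> \<alpha>" "B - Z \<subseteq> A0"
    proof (cases "B - Z = {}")
      case True
      then show ?thesis using that partsD(4)[OF \<alpha>] not_empty by blast
    next
      case False
      then obtain x where x: "x \<in> B - Z" by auto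
      then obtain A0 where A0: "A0 \<in> \<alpha>" "x \<in> A0" using partsD(4)[OF \<alpha>] Bs by blast
      have "y \<in> A0" if y: "y \<in> B - Z" for y
      proof (rule same_atom_mem[OF \<alpha> A0], rule refines)
        show "same_atom \<beta> x y" unfolding same_atom_def using B x y by blast
      qed (use x y Bs in auto)
      then show ?thesis using that A0 by blast
    qed
    have "prob (B \<inter> Z) \<le> \<eta>" using Z Bs by (meson Int_lower2 finite_measure_mono order.trans)
    then have "r * (prob (B \<inter> Z) + 2 * sqrt (prob (B \<inter> Z))) \<le> r * (\<eta> + 2 * sqrt \<eta>)"
      by (intro mult_left_mono add_mono mult_left_mono real_sqrt_le_mono) auto
    then show ?thesis using cond_entropy_term_le_if_almost_in_atom[OF \<alpha> Bs(1) Z(1) A0] by linarith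
  qed
  have "cond_entropy M \<alpha> \<beta> \<le> (\<Sum>B\<in>\<beta>. r * (\<eta> + 2 * sqrt \<eta>))"
    unfolding cond_entropy_def by (intro sum_mono term_le)
  also have "\<dots> \<le> r * (r * (\<eta> + 2 * sqrt \<eta>))"
    unfolding sum_constant using partsD(2)[OF \<beta>] order_trans[OF measure_nonneg Z(2)]
    by (intro mult_right_mono mult_nonneg_nonneg add_nonneg_nonneg) auto
  finally show ?thesis by simp
qed

lemma rokhlin_le_if_agree_mod:
  assumes "\<alpha> \<in> parts M r" "\<beta> \<in> parts M r" "agree_mod M \<alpha> \<beta> \<eta>"
  shows "rokhlin M \<alpha> \<beta> \<le> 2 * (r * r * (\<eta> + 2 * sqrt \<eta>))"
proof -
  obtain Z where Z: "Z \<in> events" "prob Z \<le> \<eta>"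
    "\<forall>x\<in>space M - Z. \<forall>y\<in>space M - Z. same_atom \<alpha> x y \<longleftrightarrow> same_atom \<beta> x y"
    using assms(3) unfolding agree_mod_def by blast
  show ?thesis
    using cond_entropy_le_if_refines_outside[OF assms(1,2) Z(1,2)]
      cond_entropy_le_if_refines_outside[OF assms(2,1) Z(1,2)] Z(3)
    unfolding rokhlin_def by auto
qed

lemma rokhlin_tendsto_0_if_agree_mod:
  assumes "\<And>n. \<alpha> n \<in> parts M r" "\<beta> \<in> parts M r" "\<And>n. agree_mod M (\<alpha> n) \<beta> (\<eta> n)"
    and "\<eta> \<longlonglongrightarrow> 0"
  shows "(\<lambda>n. rokhlin M (\<alpha> n) \<beta>) \<longlonglongrightarrow> 0"
proof (rule real_tendsto_sandwich[OF _ _ tendsto_const])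
  have "(\<lambda>n. 2 * (r * r * (\<eta> n + 2 * sqrt (\<eta> n)))) \<longlonglongrightarrow> 2 * (r * r * (0 + 2 * sqrt 0))"
    by (intro tendsto_intros assms(4))
  then show "(\<lambda>n. 2 * (r * r * (\<eta> n + 2 * sqrt (\<eta> n)))) \<longlonglongrightarrow> 0" by simp
qed (use rokhlin_nonneg rokhlin_le_if_agree_mod[OF assms(1-3)] in auto)

end

section \<open>Precompactness implies bounded mean complexity\<close>

lemma finite_join_representatives:
  assumes "finite F" "\<And>\<alpha>. \<alpha> \<in> F \<Longrightarrow> finite \<alpha>"
  shows "\<exists>D\<subseteq>G. finite D \<and> card D \<le> 2 ^ card (\<Union>F) \<and>
           (\<forall>y\<in>G. \<exists>x\<in>D. \<forall>A\<in>\<Union>F. x \<in> A \<longleftrightarrow> y \<in> A)"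
proof -
  define pattern where "pattern y = {A\<in>\<Union>F. y \<in> A}" for y
  define pick where "pick P = (SOME y. y \<in> G \<and> pattern y = P)" for P
  have pick: "pick (pattern y) \<in> G \<and> pattern (pick (pattern y)) = pattern y" if "y \<in> G" for y
  proof -
    have "\<exists>z. z \<in> G \<and> pattern z = pattern y" using that by blast
    then show ?thesis unfolding pick_def by (rule someI_ex)
  qed
  have fin: "finite (\<Union>F)" using assms by blast
  have "pattern ` G \<subseteq> Pow (\<Union>F)" unfolding pattern_def by auto
  then have "finite (pattern ` G)" "card (pattern ` G) \<le> 2 ^ card (\<Union>F)"
    using fin by (auto intro: finite_subset simp flip: card_Pow dest: card_mono[rotated])
  then have "finite (pick ` pattern ` G)" "card (pick ` pattern ` G) \<le> 2 ^ card (\<Union>F)"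
    using card_image_le le_trans by blast+
  moreover have "\<exists>x\<in>pick ` pattern ` G. \<forall>A\<in>\<Union>F. x \<in> A \<longleftrightarrow> y \<in> A" if "y \<in> G" for y
    using pick[OF that] that unfolding pattern_def by blast
  moreover have "pick ` pattern ` G \<subseteq> G" using pick by blast
  ultimately show ?thesis by blast
qed

lemma card_mem_eq_sum_indicator:
  "finite E \<Longrightarrow> real (card {a\<in>E. y \<in> S a}) = (\<Sum>a\<in>E. indicator (S a) y)"
  by (simp add: indicator_def sum.If_cases Int_def conj_commute)

lemma H_E_eq_card_not_atom:
  assumes "finite E" "y \<in> space M"
  shows "H_E E x y = real (card {\<alpha>\<in>E. y \<in> space M - atom_of \<alpha> x}) / card E"
  unfolding H_E_def using assms by (simp add: atom_of_iff same_atom_def)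

lemma card_not_same_atom_le:
  assumes "finite E" and b: "\<And>\<alpha>. \<alpha> \<in> E \<Longrightarrow> same_atom (b \<alpha>) x y"
    and agree: "\<And>\<alpha>. \<alpha> \<in> E \<Longrightarrow> x \<notin> Z \<alpha> \<Longrightarrow> y \<notin> Z \<alpha> \<Longrightarrow> same_atom \<alpha> x y \<longleftrightarrow> same_atom (b \<alpha>) x y"
  shows "card {\<alpha>\<in>E. \<not> same_atom \<alpha> x y} \<le> card {\<alpha>\<in>E. x \<in> Z \<alpha>} + card {\<alpha>\<in>E. y \<in> Z \<alpha>}"
proof -
  have "{\<alpha>\<in>E. \<not> same_atom \<alpha> x y} \<subseteq> {\<alpha>\<in>E. x \<in> Z \<alpha>} \<union> {\<alpha>\<in>E. y \<in> Z \<alpha>}"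
    using b agree by blast
  then have "card {\<alpha>\<in>E. \<not> same_atom \<alpha> x y} \<le> card ({\<alpha>\<in>E. x \<in> Z \<alpha>} \<union> {\<alpha>\<in>E. y \<in> Z \<alpha>})"
    using assms(1) by (intro card_mono) auto
  also have "\<dots> \<le> card {\<alpha>\<in>E. x \<in> Z \<alpha>} + card {\<alpha>\<in>E. y \<in> Z \<alpha>}" by (rule card_Un_le)
  finally show ?thesis .
qed

lemma separated_sequence_if_no_finite_net:
  assumes "\<And>F. finite F \<Longrightarrow> F \<subseteq> K \<Longrightarrow> \<exists>a\<in>K. \<forall>b\<in>F. \<not> close a b"
  shows "\<exists>u::nat \<Rightarrow> 'a. (\<forall>n. u n \<in> K) \<and> (\<forall>m n. m < n \<longrightarrow> \<not> close (u n) (u m))"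
proof -
  obtain g where g: "\<And>F. finite F \<Longrightarrow> F \<subseteq> K \<Longrightarrow> g F \<in> K \<and> (\<forall>b\<in>F. \<not> close (g F) b)"
    using assms by metis
  define W where "W = rec_nat {} (\<lambda>_ F. insert (g F) F)"
  have W: "W 0 = {}" "W (Suc n) = insert (g (W n)) (W n)" for n unfolding W_def by simp_all
  have W_fin: "finite (W n) \<and> W n \<subseteq> K" for n
    by (induction n) (simp_all add: W g)
  have earlier: "g (W m) \<in> W n" if "m < n" for m n
    using that by (induction n) (auto simp: W less_Suc_eq)
  show ?thesis
  proof (intro exI[of _ "\<lambda>n. g (W n)"] conjI allI impI)
    show "g (W n) \<in> K" for n using g W_fin by blast
    show "\<not> close (g (W n)) (g (W m))" if "m < n" for m n
      using g[of "W n"] W_fin earlier[OF that] by blast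
  qed
qed

context prob_space
begin

lemma
  assumes "finite E" "\<And>a. a \<in> E \<Longrightarrow> S a \<in> events"
  shows borel_measurable_card_mem: "(\<lambda>y. real (card {a\<in>E. y \<in> S a})) \<in> borel_measurable M"
    and integrable_card_mem: "integrable M (\<lambda>y. real (card {a\<in>E. y \<in> S a}))"
    and integral_card_mem: "(\<integral>y. real (card {a\<in>E. y \<in> S a}) \<partial>M) = (\<Sum>a\<in>E. prob (S a))"
proof -
  have ind: "integrable M (indicator (S a) :: 'a \<Rightarrow> real)" if "a \<in> E" for a
    using assms(2)[OF that] by (intro integrable_real_indicator) (auto simp: less_top[symmetric])
  show "integrable M (\<lambda>y. real (card {a\<in>E. y \<in> S a}))"
    unfolding card_mem_eq_sum_indicator[OF assms(1)]
    by (intro Bochner_Integration.integrable_sum ind)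
  then show "(\<lambda>y. real (card {a\<in>E. y \<in> S a})) \<in> borel_measurable M"
    by (rule borel_measurable_integrable)
  have "(\<integral>y. (\<Sum>a\<in>E. indicator (S a) y :: real) \<partial>M) = (\<Sum>a\<in>E. \<integral>y. indicator (S a) y \<partial>M)"
    by (rule Bochner_Integration.integral_sum) (rule ind)
  also have "\<dots> = (\<Sum>a\<in>E. prob (S a))" using assms(2) by (intro sum.cong) auto
  finally show "(\<integral>y. real (card {a\<in>E. y \<in> S a}) \<partial>M) = (\<Sum>a\<in>E. prob (S a))"
    unfolding card_mem_eq_sum_indicator[OF assms(1)] .
qed

lemma H_ball_in_events:
  assumes "finite E" "E \<subseteq> parts M r"
  shows "H_ball M E x \<epsilon> \<in> events"
proof -
  have "H_ball M E x \<epsilon> =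
      {y\<in>space M. real (card {\<alpha>\<in>E. y \<in> space M - atom_of \<alpha> x}) / card E < \<epsilon>}"
    unfolding H_ball_def using H_E_eq_card_not_atom[OF assms(1)] by auto
  moreover have "space M - atom_of \<alpha> x \<in> events" if "\<alpha> \<in> E" for \<alpha>
    using atom_of_in_sets[of \<alpha> M r] that assms(2) by auto
  then have "(\<lambda>y. real (card {\<alpha>\<in>E. y \<in> space M - atom_of \<alpha> x}) / card E) \<in> borel_measurable M"
    by (intro borel_measurable_divide borel_measurable_card_mem[OF assms(1)]) auto
  ultimately show ?thesis using borel_measurable_less[OF _ borel_measurable_const] by simp
qed

lemma mean_complexity_le:
  assumes "finite D" "D \<subseteq> space M" "prob (\<Union>x\<in>D. H_ball M E x \<epsilon>) > 1 - \<epsilon>"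
  shows "mean_complexity M E \<epsilon> \<le> card D"
  unfolding mean_complexity_def using assms by (intro Least_le) blast

lemma mean_complexity_attained:
  assumes "finite E" "E \<subseteq> parts M r" "\<epsilon> > 0"
  obtains D where "finite D" "D \<subseteq> space M" "card D = mean_complexity M E \<epsilon>"
    "prob (\<Union>x\<in>D. H_ball M E x \<epsilon>) > 1 - \<epsilon>"
proof -
  have "\<And>\<alpha>. \<alpha> \<in> E \<Longrightarrow> finite \<alpha>" using partsD(1) assms(2) by blast
  then obtain D where D: "D \<subseteq> space M" "finite D"
    "\<And>y. y \<in> space M \<Longrightarrow> \<exists>x\<in>D. \<forall>A\<in>\<Union>E. x \<in> A \<longleftrightarrow> y \<in> A"
    using finite_join_representatives[OF assms(1), of "space M"] by auto
  have "y \<in> (\<Union>x\<in>D. H_ball M E x \<epsilon>)" if y: "y \<in> space M" for y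
  proof -
    obtain x where x: "x \<in> D" "\<forall>A\<in>\<Union>E. x \<in> A \<longleftrightarrow> y \<in> A" using D(3)[OF y] by blast
    have "same_atom \<alpha> x y" if "\<alpha> \<in> E" for \<alpha>
      using x(2) that partsD(4)[of \<alpha> M r] assms(2) y unfolding same_atom_def by blast
    then have "{\<alpha>\<in>E. \<not> same_atom \<alpha> x y} = {}" by blast
    then have "H_E E x y = 0" unfolding H_E_def same_atom_def by (metis card.empty div_0 of_nat_0)
    then show ?thesis unfolding H_ball_def using x(1) y assms(3) by force
  qed
  then have "(\<Union>x\<in>D. H_ball M E x \<epsilon>) = space M" unfolding H_ball_def by auto
  then have "\<exists>n D. finite D \<and> D \<subseteq> space M \<and> card D = n \<and>
      prob (\<Union>x\<in>D. H_ball M E x \<epsilon>) > 1 - \<epsilon>"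
    using D assms(3) by (auto simp: prob_space)
  from LeastI_ex[OF this] show ?thesis
    using that unfolding mean_complexity_def by blast
qed

lemma finite_net_if_precompact_parts:
  assumes pc: "precompact_parts M r K" and K: "K \<subseteq> parts M r" and \<delta>: "\<delta> > 0"
  shows "\<exists>F. finite F \<and> F \<subseteq> K \<and> (\<forall>\<alpha>\<in>K. \<exists>\<beta>\<in>F. agree_mod M \<alpha> \<beta> \<delta>)"
proof (rule ccontr)
  assume no_net: "\<not> ?thesis"
  have "\<exists>\<alpha>\<in>K. \<forall>\<beta>\<in>F. \<not> agree_mod M \<alpha> \<beta> \<delta>" if "finite F" "F \<subseteq> K" for F
  proof (rule ccontr)
    assume "\<not> (\<exists>\<alpha>\<in>K. \<forall>\<beta>\<in>F. \<not> agree_mod M \<alpha> \<beta> \<delta>)"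
    then have "\<forall>\<alpha>\<in>K. \<exists>\<beta>\<in>F. agree_mod M \<alpha> \<beta> \<delta>" by blast
    with that no_net show False by blast
  qed
  then have "\<exists>u::nat \<Rightarrow> 'a set set. (\<forall>n. u n \<in> K) \<and> (\<forall>m n. m < n \<longrightarrow> \<not> agree_mod M (u n) (u m) \<delta>)"
    by (rule separated_sequence_if_no_finite_net)
  then obtain u :: "nat \<Rightarrow> 'a set set"
    where u: "\<And>n. u n \<in> K" "\<And>m n. m < n \<Longrightarrow> \<not> agree_mod M (u n) (u m) \<delta>"
    by blast
  obtain \<phi> \<beta> where \<phi>: "strict_mono \<phi>" and \<beta>: "\<beta> \<in> parts M r"
    and lim: "(\<lambda>n. rokhlin M (u (\<phi> n)) \<beta>) \<longlonglongrightarrow> 0"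
    using pc u(1) unfolding precompact_parts_def by blast
  obtain N where N: "\<And>n. n \<ge> N \<Longrightarrow> rokhlin M (u (\<phi> n)) \<beta> < \<delta> / 2"
    using LIMSEQ_D[OF lim, of "\<delta> / 2"] \<delta> rokhlin_nonneg by fastforce
  have parts: "u (\<phi> n) \<in> parts M r" for n using u(1) K by blast
  have "agree_mod M (u (\<phi> (Suc N))) (u (\<phi> N))
      (rokhlin M (u (\<phi> (Suc N))) \<beta> + rokhlin M (u (\<phi> N)) \<beta>)"
    by (rule agree_mod_trans[OF agree_mod_rokhlin[OF parts \<beta>]
          agree_mod_sym[OF agree_mod_rokhlin[OF parts \<beta>]]])
  then have "agree_mod M (u (\<phi> (Suc N))) (u (\<phi> N)) \<delta>"
    by (rule agree_mod_mono) (use N[of N] N[of "Suc N"] in simp)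
  with u(2)[of "\<phi> N" "\<phi> (Suc N)"] \<phi> show False by (simp add: strict_mono_def)
qed

lemma
  fixes c :: real
  assumes E: "finite E" "E \<noteq> {}" and Z: "\<And>\<alpha>. \<alpha> \<in> E \<Longrightarrow> Z \<alpha> \<in> events"
    "\<And>\<alpha>. \<alpha> \<in> E \<Longrightarrow> prob (Z \<alpha>) \<le> \<delta>" and c: "c > 0"
  shows often_in_events: "{y\<in>space M. c * card E \<le> card {\<alpha>\<in>E. y \<in> Z \<alpha>}} \<in> events"
    and prob_often_in_le: "prob {y\<in>space M. c * card E \<le> card {\<alpha>\<in>E. y \<in> Z \<alpha>}} \<le> \<delta> / c"
proof -
  define n where "n = real (card E)"
  have n: "n > 0" unfolding n_def using E by (simp add: card_gt_0_iff)
  show "{y\<in>space M. c * card E \<le> card {\<alpha>\<in>E. y \<in> Z \<alpha>}} \<in> events"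
    using Z(1)
    by (intro borel_measurable_le borel_measurable_const borel_measurable_card_mem E(1)) auto
  have "prob {y\<in>space M. c * n \<le> card {\<alpha>\<in>E. y \<in> Z \<alpha>}} \<le> (\<integral>y. card {\<alpha>\<in>E. y \<in> Z \<alpha>} \<partial>M) / (c * n)"
    using n c Z(1) by (intro integral_Markov_inequality_measure integrable_card_mem E(1)) auto
  also have "(\<integral>y. card {\<alpha>\<in>E. y \<in> Z \<alpha>} \<partial>M) = (\<Sum>\<alpha>\<in>E. prob (Z \<alpha>))"
    by (rule integral_card_mem[OF E(1) Z(1)])
  also have "\<dots> \<le> n * \<delta>" unfolding n_def by (rule sum_bounded_above) (rule Z(2))
  finally show "prob {y\<in>space M. c * card E \<le> card {\<alpha>\<in>E. y \<in> Z \<alpha>}} \<le> \<delta> / c"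
    using n c unfolding n_def by (simp add: divide_right_mono field_simps)
qed

lemma mean_complexity_le_if_net:
  assumes E: "finite E" "E \<noteq> {}" "E \<subseteq> parts M r" and \<epsilon>: "\<epsilon> > 0"
    and F: "finite F" "F \<subseteq> parts M r"
    and net: "\<And>\<alpha>. \<alpha> \<in> E \<Longrightarrow> \<exists>\<beta>\<in>F. agree_mod M \<alpha> \<beta> (\<epsilon> * \<epsilon> / 4)"
  shows "mean_complexity M E \<epsilon> \<le> 2 ^ card (\<Union>F)"
proof -
  obtain b Z where b: "\<And>\<alpha>. \<alpha> \<in> E \<Longrightarrow> b \<alpha> \<in> F"
    and Z: "\<And>\<alpha>. \<alpha> \<in> E \<Longrightarrow> Z \<alpha> \<in> events" "\<And>\<alpha>. \<alpha> \<in> E \<Longrightarrow> prob (Z \<alpha>) \<le> \<epsilon> * \<epsilon> / 4"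
      "\<And>\<alpha> x y. \<alpha> \<in> E \<Longrightarrow> x \<in> space M - Z \<alpha> \<Longrightarrow> y \<in> space M - Z \<alpha> \<Longrightarrow>
         same_atom \<alpha> x y \<longleftrightarrow> same_atom (b \<alpha>) x y"
    using net unfolding agree_mod_def by metis
  define cnt where "cnt y = real (card {\<alpha>\<in>E. y \<in> Z \<alpha>})" for y
  define G where "G = space M - {y\<in>space M. \<epsilon> / 2 * card E \<le> cnt y}"
  have "prob {y\<in>space M. \<epsilon> / 2 * card E \<le> cnt y} \<le> \<epsilon> / 2"
    using prob_often_in_le[OF E(1,2) Z(1,2), where c = "\<epsilon> / 2"] \<epsilon> unfolding cnt_def by simp
  then have G: "prob G \<ge> 1 - \<epsilon> / 2"
    using prob_compl[OF often_in_events[OF E(1,2) Z(1,2), where c = "\<epsilon> / 2"]] \<epsilon>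
    unfolding G_def cnt_def by simp
  have "\<And>\<beta>. \<beta> \<in> F \<Longrightarrow> finite \<beta>" using partsD(1) F(2) by blast
  then obtain D where D: "D \<subseteq> G" "finite D" "card D \<le> 2 ^ card (\<Union>F)"
    "\<And>y. y \<in> G \<Longrightarrow> \<exists>x\<in>D. \<forall>A\<in>\<Union>F. x \<in> A \<longleftrightarrow> y \<in> A"
    using finite_join_representatives[OF F(1), of G] by auto
  have "G \<subseteq> (\<Union>x\<in>D. H_ball M E x \<epsilon>)"
  proof
    fix y assume y: "y \<in> G"
    obtain x where x: "x \<in> D" "\<forall>A\<in>\<Union>F. x \<in> A \<longleftrightarrow> y \<in> A" using D(4)[OF y] by blast
    have xy: "x \<in> G" "x \<in> space M" "y \<in> space M" using x(1) D(1) y unfolding G_def by auto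
    have "same_atom (b \<alpha>) x y" if "\<alpha> \<in> E" for \<alpha>
    proof -
      have "b \<alpha> \<in> parts M r" using b[OF that] F(2) by blast
      then obtain A where "A \<in> b \<alpha>" "y \<in> A" using partsD(4) xy(3) by blast
      moreover have "x \<in> A" using calculation x(2) b[OF that] by blast
      ultimately show ?thesis unfolding same_atom_def by blast
    qed
    then have "card {\<alpha>\<in>E. \<not> same_atom \<alpha> x y} \<le> cnt x + cnt y"
      unfolding cnt_def using card_not_same_atom_le[OF E(1), of b x y Z] Z(3) xy by fastforce
    also have "\<dots> < \<epsilon> * card E" using xy y unfolding G_def by auto
    finally have "H_E E x y < \<epsilon>"
      unfolding H_E_def same_atom_def using E(1,2) by (simp add: divide_less_eq card_gt_0_iff)
    then show "y \<in> (\<Union>x\<in>D. H_ball M E x \<epsilon>)" unfolding H_ball_def using x(1) xy by blast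
  qed
  moreover have "(\<Union>x\<in>D. H_ball M E x \<epsilon>) \<in> events"
    using D(2) H_ball_in_events[OF E(1,3)] by blast
  ultimately have "prob G \<le> prob (\<Union>x\<in>D. H_ball M E x \<epsilon>)" by (rule finite_measure_mono)
  then have "prob (\<Union>x\<in>D. H_ball M E x \<epsilon>) > 1 - \<epsilon>" using G \<epsilon> by linarith
  moreover have "D \<subseteq> space M" using D(1) unfolding G_def by blast
  ultimately show ?thesis using mean_complexity_le[OF D(2)] D(3) by fastforce
qed

lemma bounded_mean_complexity_if_precompact_parts:
  assumes pc: "precompact_parts M r K" and K: "K \<subseteq> parts M r"
  shows "bounded_mean_complexity M K"
  unfolding bounded_mean_complexity_def
proof (intro allI impI)
  fix \<epsilon> :: real assume \<epsilon>: "\<epsilon> > 0"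
  then obtain F where F: "finite F" "F \<subseteq> K" "\<forall>\<alpha>\<in>K. \<exists>\<beta>\<in>F. agree_mod M \<alpha> \<beta> (\<epsilon> * \<epsilon> / 4)"
    using finite_net_if_precompact_parts[OF pc K, of "\<epsilon> * \<epsilon> / 4"] by auto
  have "mean_complexity M E \<epsilon> \<le> 2 ^ card (\<Union>F)" if "finite E" "E \<noteq> {}" "E \<subseteq> K" for E
    using mean_complexity_le_if_net[OF that(1,2) _ \<epsilon> F(1)] that(3) F(2,3) K by blast
  then show "\<exists>C. \<forall>E. finite E \<and> E \<noteq> {} \<and> E \<subseteq> K \<longrightarrow> mean_complexity M E \<epsilon> \<le> C" by blast
qed

end

lemma seq_bounded_mean_complexity_if_bounded:
  assumes "bounded_mean_complexity M K" "\<And>n. s n \<in> K"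
  shows "seq_bounded_mean_complexity M s"
  using assms unfolding bounded_mean_complexity_def seq_bounded_mean_complexity_def
  by (metis atLeastAtMost_iff empty_iff finite_atLeastAtMost finite_imageI image_is_empty
      image_subset_iff order_refl)

section \<open>Agreeing pairs from bounded mean complexity\<close>

lemma exists_same_pattern_pair:
  assumes "finite D" "card D \<le> C" "card G > 2 ^ (C * C)"
  shows "\<exists>\<alpha>\<in>G. \<exists>\<alpha>'\<in>G. \<alpha> \<noteq> \<alpha>' \<and> (\<forall>u\<in>D. \<forall>v\<in>D. same_atom \<alpha> u v \<longleftrightarrow> same_atom \<alpha>' u v)"
proof -
  have "card (Pow (D \<times> D)) \<le> 2 ^ (C * C)"
    using assms(1,2) by (simp add: card_Pow card_cartesian_product power_increasing mult_le_mono)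
  then have "\<not> inj_on (\<lambda>\<alpha>. {(u, v) \<in> D \<times> D. same_atom \<alpha> u v}) G"
    using card_inj_on_le[of _ G "Pow (D \<times> D)"] assms(1,3) by fastforce
  then obtain \<alpha> \<alpha>' where "\<alpha> \<in> G" "\<alpha>' \<in> G" "\<alpha> \<noteq> \<alpha>'"
    "{(u, v) \<in> D \<times> D. same_atom \<alpha> u v} = {(u, v) \<in> D \<times> D. same_atom \<alpha>' u v}"
    unfolding inj_on_def by blast
  then show ?thesis by blast
qed

lemma card_small_terms_gt_half:
  fixes f :: "'a \<Rightarrow> real"
  assumes "finite E" "(\<Sum>\<alpha>\<in>E. f \<alpha>) < 2 * real (card E) * \<epsilon>" "\<epsilon> > 0"
    and "\<And>\<alpha>. \<alpha> \<in> E \<Longrightarrow> f \<alpha> \<ge> 0"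
  shows "card E < 2 * card {\<alpha>\<in>E. f \<alpha> \<le> 4 * \<epsilon>}"
proof -
  define Good where "Good = {\<alpha>\<in>E. f \<alpha> \<le> 4 * \<epsilon>}"
  have "card (E - Good) * (4 * \<epsilon>) \<le> (\<Sum>\<alpha>\<in>E - Good. f \<alpha>)"
    by (rule sum_bounded_below) (auto simp: Good_def)
  also have "\<dots> \<le> (\<Sum>\<alpha>\<in>E. f \<alpha>)" using assms(1,4) by (intro sum_mono2) auto
  finally have "\<epsilon> * (4 * card (E - Good)) < \<epsilon> * (2 * card E)"
    using assms(2) by (simp add: algebra_simps)
  then have "2 * card (E - Good) < card E" using assms(3) by (simp only: mult_less_cancel_left_pos)
  moreover have "card (E - Good) = card E - card Good" "card Good \<le> card E"
    using assms(1) by (auto simp: Good_def card_Diff_subset intro: card_mono)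
  ultimately show ?thesis unfolding Good_def by linarith
qed

lemma exists_measurable_first_cover:
  assumes "finite D" "\<And>x. x \<in> D \<Longrightarrow> A x \<in> sets M"
  shows "\<exists>V c. (\<forall>x\<in>D. V x \<in> sets M) \<and> (\<forall>x\<in>D. \<forall>y\<in>V x. c y = x \<and> y \<in> A x) \<and>
    (\<Union>x\<in>D. V x) = (\<Union>x\<in>D. A x)"
proof -
  define L where "L = card D"
  obtain e where e: "bij_betw e {0..<L} D"
    unfolding L_def using ex_bij_betw_nat_finite[OF assms(1)] by blast
  define A' where "A' i = (if i < L then A (e i) else {})" for i
  define V where "V x = disjointed A' (inv_into {0..<L} e x)" for x
  define c where "c y = e (LEAST i. y \<in> A' i)" for y
  have "range A' \<subseteq> sets M" unfolding A'_def using assms(2) bij_betw_apply[OF e] by auto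
  then have "range (disjointed A') \<subseteq> sets M" by (rule sets.range_disjointed_sets)
  then have "\<forall>x\<in>D. V x \<in> sets M" unfolding V_def by blast
  moreover have "c y = e i \<and> y \<in> A' i" if "y \<in> disjointed A' i" for y i
  proof -
    have "y \<in> A' i" "\<And>j. j < i \<Longrightarrow> y \<notin> A' j" using that unfolding disjointed_def by auto
    then have "(LEAST j. y \<in> A' j) = i" by (intro Least_equality) (auto simp: not_less[symmetric])
    then show ?thesis unfolding c_def using \<open>y \<in> A' i\<close> by simp
  qed
  then have "\<forall>x\<in>D. \<forall>y\<in>V x. c y = x \<and> y \<in> A x"
    unfolding V_def A'_def using bij_betw_inv_into_right[OF e] bij_betw_inv_into[OF e]
    by (fastforce split: if_splits dest: bij_betw_apply)
  moreover have "(\<Union>x\<in>D. V x) = (\<Union>x\<in>D. A x)"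
  proof -
    have "(\<Union>x\<in>D. V x) = (\<Union>i\<in>{0..<L}. disjointed A' i)"
      unfolding V_def using bij_betw_inv_into_left[OF e] bij_betw_imp_surj_on[OF e] by force
    also have "\<dots> = (\<Union>i\<in>{0..<L}. A' i)" by (rule finite_UN_disjointed_eq)
    also have "\<dots> = (\<Union>x\<in>D. A x)" unfolding A'_def using bij_betw_imp_surj_on[OF e] by auto
    finally show ?thesis .
  qed
  ultimately show ?thesis by blast
qed

lemma agree_mod_if_common_centers:
  assumes \<alpha>: "\<alpha> \<in> parts M r" "\<alpha>' \<in> parts M r" and Y: "Y \<in> sets M"
    and centers: "\<And>y. y \<in> space M - Y \<Longrightarrow> c y \<in> D \<and> same_atom \<alpha> (c y) y \<and> same_atom \<alpha>' (c y) y"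
    and pattern: "\<And>u v. u \<in> D \<Longrightarrow> v \<in> D \<Longrightarrow> same_atom \<alpha> u v \<longleftrightarrow> same_atom \<alpha>' u v"
  shows "agree_mod M \<alpha> \<alpha>' (measure M Y)"
  unfolding agree_mod_def
proof (intro bexI[OF _ Y] conjI order_refl ballI)
  fix y z assume "y \<in> space M - Y" "z \<in> space M - Y"
  with centers have c: "c y \<in> D" "c z \<in> D"
    "same_atom \<alpha> (c y) y" "same_atom \<alpha>' (c y) y" "same_atom \<alpha> (c z) z" "same_atom \<alpha>' (c z) z"
    by blast+
  have "same_atom \<alpha> y z \<longleftrightarrow> same_atom \<alpha> (c y) (c z)" using same_atom_cong[OF \<alpha>(1)] c by blast
  also have "\<dots> \<longleftrightarrow> same_atom \<alpha>' (c y) (c z)" using pattern c by blast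
  also have "\<dots> \<longleftrightarrow> same_atom \<alpha>' y z" using same_atom_cong[OF \<alpha>(2)] c by blast
  finally show "same_atom \<alpha> y z \<longleftrightarrow> same_atom \<alpha>' y z" .
qed

context prob_space
begin

lemma sum_prob_lt_if_sparse_on:
  fixes \<epsilon> :: real
  assumes E: "finite E" "E \<noteq> {}" and B: "\<And>\<alpha>. \<alpha> \<in> E \<Longrightarrow> B \<alpha> \<in> events"
    and U: "U \<in> events" "prob U > 1 - \<epsilon>"
    and sparse: "\<And>y. y \<in> U \<Longrightarrow> real (card {\<alpha>\<in>E. y \<in> B \<alpha>}) \<le> real (card E) * \<epsilon>"
  shows "(\<Sum>\<alpha>\<in>E. prob (B \<alpha>)) < 2 * real (card E) * \<epsilon>"
proof -
  define n where "n = real (card E)"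
  have n: "n > 0" unfolding n_def using E by (simp add: card_gt_0_iff)
  have "\<epsilon> > 0" using U(2) prob_le_1[of U] by linarith
  have count_le: "card {\<alpha>\<in>E. y \<in> B \<alpha>} \<le> n * indicator (space M - U) y + n * \<epsilon>"
    if "y \<in> space M" for y
  proof (cases "y \<in> U")
    case False
    have "card {\<alpha>\<in>E. y \<in> B \<alpha>} \<le> card E" using E(1) by (intro card_mono) auto
    then have "card {\<alpha>\<in>E. y \<in> B \<alpha>} \<le> n" unfolding n_def by simp
    moreover have "0 \<le> n * \<epsilon>" using \<open>\<epsilon> > 0\<close> n by simp
    ultimately show ?thesis using False that by simp
  qed (use sparse n_def in simp)
  have int_ind: "integrable M (\<lambda>y. n * indicator (space M - U) y :: real)"
    using U
    by (intro integrable_mult_right integrable_real_indicator) (auto simp: less_top[symmetric])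
  have "(\<Sum>\<alpha>\<in>E. prob (B \<alpha>)) = (\<integral>y. real (card {\<alpha>\<in>E. y \<in> B \<alpha>}) \<partial>M)"
    using integral_card_mem[OF E(1) B] by simp
  also have "\<dots> \<le> (\<integral>y. n * indicator (space M - U) y + n * \<epsilon> \<partial>M)"
    using B count_le int_ind
    by (intro integral_mono integrable_card_mem E(1) Bochner_Integration.integrable_add) auto
  also have "\<dots> = n * (1 - prob U) + n * \<epsilon>"
    using U by (simp add: Bochner_Integration.integral_add[OF int_ind] prob_compl prob_space)
  also have "\<dots> < 2 * n * \<epsilon>"
    using mult_strict_left_mono[of "1 - prob U" \<epsilon> n] U(2) n by linarith
  finally show ?thesis unfolding n_def .
qed

text \<open>Every point of the \<open>H\<^sub>E\<close>-balls is assigned the first centre in \<open>D\<close> whose ball contains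
  it; it lies outside the atom of that centre for less than an \<open>\<epsilon>\<close>-fraction of the members
  of \<open>E\<close>.\<close>
lemma exists_common_centers:
  fixes \<epsilon> :: real
  assumes E: "finite E" "E \<noteq> {}" "E \<subseteq> parts M r" and \<epsilon>: "\<epsilon> > 0"
    and D: "finite D" "D \<subseteq> space M" "prob (\<Union>x\<in>D. H_ball M E x \<epsilon>) > 1 - \<epsilon>"
  shows "\<exists>B c. (\<forall>\<alpha>\<in>E. B \<alpha> \<in> events) \<and> (\<Sum>\<alpha>\<in>E. prob (B \<alpha>)) < 2 * real (card E) * \<epsilon> \<and>
    (\<forall>\<alpha>\<in>E. \<forall>y\<in>space M - B \<alpha>. c y \<in> D \<and> same_atom \<alpha> (c y) y)"
proof -
  define U where "U = (\<Union>x\<in>D. H_ball M E x \<epsilon>)"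
  have U_sets: "U \<in> events" unfolding U_def using D(1) H_ball_in_events[OF E(1,3)] by blast
  obtain V c where V: "\<forall>x\<in>D. V x \<in> events" "\<forall>x\<in>D. \<forall>y\<in>V x. c y = x \<and> y \<in> H_ball M E x \<epsilon>"
    and U: "U = (\<Union>x\<in>D. V x)"
    using exists_measurable_first_cover[OF D(1), of "\<lambda>x. H_ball M E x \<epsilon>" M]
      H_ball_in_events[OF E(1,3)] unfolding U_def by metis
  define B where "B \<alpha> = (space M - U) \<union> (\<Union>x\<in>D. V x - atom_of \<alpha> x)" for \<alpha>
  have B_iff: "y \<in> B \<alpha> \<longleftrightarrow> \<not> same_atom \<alpha> x y" if "x \<in> D" "y \<in> V x" for x y \<alpha>
    using that V U unfolding B_def by (auto simp: atom_of_iff) (metis)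
  have B_sets: "B \<alpha> \<in> events" if "\<alpha> \<in> E" for \<alpha>
    unfolding B_def using U_sets V(1) D(1) atom_of_in_sets[of \<alpha> M r] that E(3)
    by (intro sets.Un sets.Diff sets.top sets.finite_UN) auto
  have sparse: "real (card {\<alpha>\<in>E. y \<in> B \<alpha>}) \<le> real (card E) * \<epsilon>" if y: "y \<in> U" for y
  proof -
    obtain x where x: "x \<in> D" "y \<in> V x" using y U by blast
    have "card {\<alpha>\<in>E. y \<in> B \<alpha>} = card {\<alpha>\<in>E. \<not> same_atom \<alpha> x y}" by (simp add: B_iff[OF x])
    also have "real \<dots> = real (card E) * H_E E x y"
      unfolding H_E_def same_atom_def using E(1,2) by simp
    also have "\<dots> \<le> real (card E) * \<epsilon>" using V(2) x
      unfolding H_ball_def by (intro mult_left_mono) (auto intro: less_imp_le)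
    finally show ?thesis .
  qed
  have pU: "prob U > 1 - \<epsilon>" using D(3) unfolding U_def .
  have "(\<Sum>\<alpha>\<in>E. prob (B \<alpha>)) < 2 * real (card E) * \<epsilon>"
    using sum_prob_lt_if_sparse_on[OF E(1,2) B_sets U_sets pU sparse] .
  moreover have "c y \<in> D \<and> same_atom \<alpha> (c y) y" if y: "y \<in> space M - B \<alpha>" for \<alpha> y
  proof -
    obtain x where x: "x \<in> D" "y \<in> V x" using y U unfolding B_def by blast
    then show ?thesis using B_iff[OF x] y V(2) by auto
  qed
  ultimately show ?thesis using B_sets by blast
qed

lemma exists_agreeing_pair:
  assumes E: "finite E" "E \<subseteq> parts M r" and \<epsilon>: "\<epsilon> > 0"
    and C: "mean_complexity M E \<epsilon> \<le> C" and big: "card E > 2 * 2 ^ (C * C)"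
  shows "\<exists>\<alpha>\<in>E. \<exists>\<alpha>'\<in>E. \<alpha> \<noteq> \<alpha>' \<and> agree_mod M \<alpha> \<alpha>' (8 * \<epsilon>)"
proof -
  have "E \<noteq> {}" using big by auto
  obtain D where D: "finite D" "D \<subseteq> space M" "card D = mean_complexity M E \<epsilon>"
    "prob (\<Union>x\<in>D. H_ball M E x \<epsilon>) > 1 - \<epsilon>"
    using mean_complexity_attained[OF E \<epsilon>] by blast
  obtain B c where B: "\<And>\<alpha>. \<alpha> \<in> E \<Longrightarrow> B \<alpha> \<in> events"
    and sum_B: "(\<Sum>\<alpha>\<in>E. prob (B \<alpha>)) < 2 * real (card E) * \<epsilon>"
    and c: "\<And>\<alpha> y. \<alpha> \<in> E \<Longrightarrow> y \<in> space M - B \<alpha> \<Longrightarrow> c y \<in> D \<and> same_atom \<alpha> (c y) y"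
    using exists_common_centers[OF E(1) \<open>E \<noteq> {}\<close> E(2) \<epsilon> D(1,2,4)] by blast
  define Good where "Good = {\<alpha>\<in>E. prob (B \<alpha>) \<le> 4 * \<epsilon>}"
  have "card E < 2 * card Good"
    unfolding Good_def using card_small_terms_gt_half[OF E(1) sum_B \<epsilon>] by simp
  then have "card Good > 2 ^ (C * C)" using big by linarith
  with D(1) have "\<exists>\<alpha>\<in>Good. \<exists>\<alpha>'\<in>Good. \<alpha> \<noteq> \<alpha>' \<and> (\<forall>u\<in>D. \<forall>v\<in>D. same_atom \<alpha> u v \<longleftrightarrow> same_atom \<alpha>' u v)"
    using D(3) C by (intro exists_same_pattern_pair) auto
  then obtain \<alpha> \<alpha>' where \<alpha>: "\<alpha> \<in> Good" "\<alpha>' \<in> Good" "\<alpha> \<noteq> \<alpha>'"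
    and same_pattern: "\<forall>u\<in>D. \<forall>v\<in>D. same_atom \<alpha> u v \<longleftrightarrow> same_atom \<alpha>' u v"
    by blast
  have in_E: "\<alpha> \<in> E" "\<alpha>' \<in> E" using \<alpha> unfolding Good_def by auto
  have "agree_mod M \<alpha> \<alpha>' (prob (B \<alpha> \<union> B \<alpha>'))"
    by (rule agree_mod_if_common_centers[where c = c and D = D])
      (use in_E E(2) B c same_pattern in auto)
  moreover have "prob (B \<alpha> \<union> B \<alpha>') \<le> prob (B \<alpha>) + prob (B \<alpha>')"
    using in_E by (intro measure_Un_le B)
  then have "prob (B \<alpha> \<union> B \<alpha>') \<le> 8 * \<epsilon>" using \<alpha> unfolding Good_def by simp
  ultimately have "agree_mod M \<alpha> \<alpha>' (8 * \<epsilon>)" by (rule agree_mod_mono)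
  then show ?thesis using in_E \<alpha>(3) by blast
qed

lemma exists_agreeing_terms:
  assumes u: "\<And>n. u n \<in> parts M r" and bmc: "seq_bounded_mean_complexity M u" and \<delta>: "\<delta> > 0"
  shows "\<exists>i j. i \<noteq> j \<and> agree_mod M (u i) (u j) \<delta>"
proof -
  obtain C where C: "\<And>n. n \<ge> 1 \<Longrightarrow> mean_complexity M (u ` {1..n}) (\<delta> / 8) \<le> C"
    using bmc \<delta> unfolding seq_bounded_mean_complexity_def
    by (meson zero_less_divide_iff zero_less_numeral)
  define n :: nat where "n = 2 * 2 ^ (C * C) + 1"
  show ?thesis
  proof (cases "inj_on u {1..n}")
    case True
    then have "card (u ` {1..n}) > 2 * 2 ^ (C * C)" by (simp add: card_image n_def)
    then obtain \<alpha> \<alpha>' where \<alpha>: "\<alpha> \<in> u ` {1..n}" "\<alpha>' \<in> u ` {1..n}" "\<alpha> \<noteq> \<alpha>'"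
      "agree_mod M \<alpha> \<alpha>' (8 * (\<delta> / 8))"
      using exists_agreeing_pair[of "u ` {1..n}" r "\<delta> / 8" C] u \<delta> C[of n] unfolding n_def by auto
    then obtain i j where "\<alpha> = u i" "\<alpha>' = u j" by blast
    then have "i \<noteq> j" "agree_mod M (u i) (u j) \<delta>" using \<alpha>(3,4) by auto
    then show ?thesis by blast
  next
    case False
    then obtain i j where "i \<noteq> j" "u i = u j" unfolding inj_on_def by blast
    then show ?thesis using agree_mod_refl \<delta> by (metis less_imp_le)
  qed
qed

end

section \<open>Completeness\<close>

lemma same_atom_quotient:
  assumes "equiv A R" "x \<in> A" "y \<in> A"
  shows "same_atom (A // R) x y \<longleftrightarrow> (x, y) \<in> R"
proof
  assume "same_atom (A // R) x y"
  then show "(x, y) \<in> R" unfolding same_atom_def using in_quotient_imp_in_rel[OF assms(1)] by blast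
next
  assume "(x, y) \<in> R"
  then have "x \<in> R `` {x}" "y \<in> R `` {x}" using equiv_class_self[OF assms(1,2)] by auto
  then show "same_atom (A // R) x y" unfolding same_atom_def using quotientI[OF assms(2)] by blast
qed

lemma quotient_in_parts:
  assumes R: "equiv (space M) R" and classes: "\<And>x. x \<in> space M \<Longrightarrow> R `` {x} \<in> sets M"
    and separated: "\<And>P. P \<subseteq> space M \<Longrightarrow> finite P \<Longrightarrow>
      (\<And>x y. x \<in> P \<Longrightarrow> y \<in> P \<Longrightarrow> (x, y) \<in> R \<Longrightarrow> x = y) \<Longrightarrow> card P \<le> r"
  shows "space M // R \<in> parts M r"
proof -
  define rep where "rep X = (SOME x. x \<in> X)" for X :: "'a set"
  have rep: "rep X \<in> X" if "X \<in> space M // R" for X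
    unfolding rep_def using in_quotient_imp_non_empty[OF R that] by (simp add: some_in_eq)
  have card_le: "card Q \<le> r" if Q: "Q \<subseteq> space M // R" "finite Q" for Q
  proof -
    have eq: "X = Y" if "X \<in> Q" "Y \<in> Q" "(rep X, rep Y) \<in> R" for X Y
      using quotient_eq_iff[OF R, of X Y] that rep Q(1) by blast
    then have "inj_on rep Q" using R rep Q(1) by (intro inj_onI) (metis equiv_def refl_onD subsetD
          Union_quotient[OF R] UnionI)
    moreover have "card (rep ` Q) \<le> r"
    proof (rule separated)
      show "rep ` Q \<subseteq> space M" using rep Q(1) Union_quotient[OF R] by blast
    qed (use Q eq in auto)
    ultimately show ?thesis by (simp add: card_image)
  qed
  have "finite (space M // R)"
  proof (rule ccontr)
    assume "infinite (space M // R)"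
    then obtain Q where Q: "Q \<subseteq> space M // R" "finite Q" "card Q = Suc r"
      by (meson infinite_arbitrarily_large)
    show False using card_le[OF Q(1,2)] Q(3) by simp
  qed
  moreover have "space M // R \<subseteq> sets M" using classes by (auto elim!: quotientE)
  ultimately show ?thesis
    unfolding parts_def using card_le Union_quotient[OF R] quotient_disj[OF R] by blast
qed

lemma finite_subset_incseq_UN:
  assumes "incseq W" "finite P" "P \<subseteq> (\<Union>N. W N)"
  shows "\<exists>N. P \<subseteq> W N"
  using assms(2,3)
proof (induction P rule: finite_induct)
  case (insert x P)
  then obtain N N' where "P \<subseteq> W N" "x \<in> W N'" by blast
  then have "insert x P \<subseteq> W (max N N')"
    using monoD[OF assms(1), of N "max N N'"] monoD[OF assms(1), of N' "max N N'"] by auto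
  then show ?case by blast
qed simp

locale stabilizing_partitions =
  fixes M :: "'a measure" and r :: nat and t :: "nat \<Rightarrow> 'a set set" and W :: "nat \<Rightarrow> 'a set"
  assumes parts: "\<And>k. t k \<in> parts M r" and W_sets: "\<And>N. W N \<in> sets M" and incseq: "incseq W"
    and stable: "\<And>N k x y. N \<le> k \<Longrightarrow> x \<in> W N \<Longrightarrow> y \<in> W N \<Longrightarrow>
      same_atom (t k) x y \<longleftrightarrow> same_atom (t N) x y"
begin

definition limit_rel :: "'a \<Rightarrow> 'a \<Rightarrow> bool" where
  "limit_rel x y \<longleftrightarrow> (\<exists>N. x \<in> W N \<and> y \<in> W N \<and> same_atom (t N) x y)"

lemma W_subset_space: "W N \<subseteq> space M"
  using W_sets sets.sets_into_space by blast

lemma limit_rel_iff: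
  assumes "x \<in> W N" "y \<in> W N"
  shows "limit_rel x y \<longleftrightarrow> same_atom (t N) x y"
proof
  assume "limit_rel x y"
  then obtain N' where N': "x \<in> W N'" "y \<in> W N'" "same_atom (t N') x y"
    unfolding limit_rel_def by blast
  have "same_atom (t (max N N')) x y" using stable[of N' "max N N'" x y] N' by simp
  then show "same_atom (t N) x y" using stable[of N "max N N'" x y] assms by simp
qed (use assms in \<open>auto simp: limit_rel_def\<close>)

lemma limit_rel_refl: "x \<in> (\<Union>N. W N) \<Longrightarrow> limit_rel x x"
  using same_atom_refl[OF parts] W_subset_space unfolding limit_rel_def by blast

lemma limit_rel_sym: "limit_rel x y \<Longrightarrow> limit_rel y x"
  unfolding limit_rel_def by (auto simp: same_atom_sym)

lemma limit_rel_trans: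
  assumes "limit_rel x y" "limit_rel y z"
  shows "limit_rel x z"
proof -
  have "{x, y, z} \<subseteq> (\<Union>N. W N)" using assms unfolding limit_rel_def by blast
  then obtain N where N: "x \<in> W N" "y \<in> W N" "z \<in> W N"
    using finite_subset_incseq_UN[OF incseq, of "{x, y, z}"] by auto
  have "same_atom (t N) x y" "same_atom (t N) y z" using assms limit_rel_iff N by auto
  then have "same_atom (t N) x z" by (rule same_atom_trans[OF parts])
  then show ?thesis using limit_rel_iff N by auto
qed

lemma limit_rel_class_in_sets: "{y. limit_rel x y} \<in> sets M"
proof -
  have "{y. limit_rel x y} = (\<Union>N. if x \<in> W N then W N \<inter> atom_of (t N) x else {})"
    unfolding limit_rel_def by (auto simp: atom_of_iff split: if_splits)
  then show ?thesis using W_sets atom_of_in_sets[OF parts] by auto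
qed

lemma card_le_if_limit_separated:
  assumes "P \<subseteq> (\<Union>N. W N)" "finite P" "\<And>x y. x \<in> P \<Longrightarrow> y \<in> P \<Longrightarrow> limit_rel x y \<Longrightarrow> x = y"
  shows "card P \<le> r"
proof -
  obtain N where N: "P \<subseteq> W N" using finite_subset_incseq_UN[OF incseq assms(2,1)] by blast
  then show ?thesis
    using card_le_if_separated[OF parts N[THEN order_trans, OF W_subset_space]] assms(3)
      limit_rel_iff by blast
qed

text \<open>Points outside \<open>\<Union>N. W N\<close> (a null set in the application) are merged into the class of
  an arbitrary point \<open>x0\<close>, so that the limit does not acquire an extra atom.\<close>
lemma exists_limit:
  assumes "(\<Union>N. W N) \<noteq> {}"
  shows "\<exists>\<beta>\<in>parts M r. \<forall>N. \<forall>x\<in>W N. \<forall>y\<in>W N. same_atom \<beta> x y \<longleftrightarrow> same_atom (t N) x y"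
proof -
  define S where "S = (\<Union>N. W N)"
  obtain x0 where x0: "x0 \<in> S" using assms unfolding S_def by blast
  define key where "key x = (if x \<in> S then x else x0)" for x
  define R where "R = {(x, y) \<in> space M \<times> space M. limit_rel (key x) (key y)}"
  have key: "key x \<in> S" for x unfolding key_def using x0 by simp
  have "equiv (space M) R"
  proof (rule equivI)
    show "refl_on (space M) R"
      unfolding R_def using limit_rel_refl key[unfolded S_def] by (auto intro: refl_onI)
    show "sym R" unfolding R_def sym_def using limit_rel_sym by blast
    show "trans R" unfolding R_def trans_def using limit_rel_trans by blast
  qed (auto simp: R_def)
  moreover have "R `` {x} \<in> sets M" if "x \<in> space M" for x
  proof -
    have "S \<in> sets M" unfolding S_def using W_sets by blast
    moreover have "R `` {x} = (S \<inter> {y. limit_rel (key x) y}) \<union>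
        (if limit_rel (key x) x0 then space M - S else {})"
      unfolding R_def key_def S_def using that W_subset_space by (auto split: if_splits)
    ultimately show ?thesis using limit_rel_class_in_sets by auto
  qed
  moreover have "card P \<le> r"
    if P: "P \<subseteq> space M" "finite P" "\<And>x y. x \<in> P \<Longrightarrow> y \<in> P \<Longrightarrow> (x, y) \<in> R \<Longrightarrow> x = y" for P
  proof -
    have related: "(x, y) \<in> R" if "x \<in> P" "y \<in> P" "limit_rel (key x) (key y)" for x y
      using that P(1) unfolding R_def by blast
    have "inj_on key P"
      using related limit_rel_refl[OF key[unfolded S_def]] P(3) by (intro inj_onI) metis
    moreover have "card (key ` P) \<le> r"
    proof (rule card_le_if_limit_separated)
      show "key ` P \<subseteq> (\<Union>N. W N)" using key unfolding S_def by blast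
      show "a = b" if "a \<in> key ` P" "b \<in> key ` P" "limit_rel a b" for a b
        using that related P(3) by blast
    qed (use P(2) in simp)
    ultimately show ?thesis by (simp add: card_image)
  qed
  ultimately have "space M // R \<in> parts M r" by (rule quotient_in_parts)
  moreover have "same_atom (space M // R) x y \<longleftrightarrow> same_atom (t N) x y"
    if xy: "x \<in> W N" "y \<in> W N" for N x y
  proof -
    have "x \<in> space M" "y \<in> space M" "key x = x" "key y = y"
      using xy W_subset_space unfolding key_def S_def by auto
    then have "same_atom (space M // R) x y \<longleftrightarrow> limit_rel x y"
      using same_atom_quotient[OF \<open>equiv (space M) R\<close>] unfolding R_def by auto
    also have "\<dots> \<longleftrightarrow> same_atom (t N) x y" by (rule limit_rel_iff[OF xy])
    finally show ?thesis .
  qed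
  ultimately show ?thesis by blast
qed

end

context prob_space
begin

lemma prob_UN_tail_le:
  assumes "\<And>k. Z k \<in> events" "\<And>k. prob (Z k) \<le> (1/2) ^ k"
  shows "prob (\<Union>k. Z (k + N)) \<le> 2 * (1/2) ^ N"
proof -
  have geom: "(\<lambda>k. (1/2) ^ N * (1/2) ^ k) sums ((1/2) ^ N * 2 :: real)"
    using sums_mult[OF geometric_sums[of "1/2 :: real"], of "(1/2) ^ N"] by simp
  have le: "prob (Z (k + N)) \<le> (1/2) ^ N * (1/2) ^ k" for k
    using assms(2)[of "k + N"] by (simp add: power_add mult.commute)
  have summable: "summable (\<lambda>k. prob (Z (k + N)))"
    by (rule summable_comparison_test'[OF sums_summable[OF geom]]) (use le in simp)
  have "prob (\<Union>k. Z (k + N)) \<le> (\<Sum>k. prob (Z (k + N)))"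
    using assms(1) summable by (intro finite_measure_subadditive_countably) auto
  also have "\<dots> \<le> (\<Sum>k. (1/2) ^ N * (1/2) ^ k)"
    by (rule suminf_le[OF le summable sums_summable[OF geom]])
  also have "\<dots> = (1/2) ^ N * 2" using geom by (rule sums_unique[symmetric])
  finally show ?thesis by simp
qed

lemma agree_mod_Cauchy_limit:
  assumes t: "\<And>k. t k \<in> parts M r" and Cauchy: "\<And>k. agree_mod M (t k) (t (Suc k)) ((1/2) ^ k)"
  shows "\<exists>\<beta>\<in>parts M r. \<forall>N. agree_mod M (t N) \<beta> (2 * (1/2) ^ N)"
proof -
  obtain Z where Z: "\<And>k. Z k \<in> events" "\<And>k. prob (Z k) \<le> (1/2) ^ k"
    "\<And>k x y. x \<in> space M - Z k \<Longrightarrow> y \<in> space M - Z k \<Longrightarrow>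
       same_atom (t k) x y \<longleftrightarrow> same_atom (t (Suc k)) x y"
    using Cauchy unfolding agree_mod_def by metis
  define W where "W N = space M - (\<Union>k. Z (k + N))" for N
  have W_sets: "W N \<in> events" for N unfolding W_def using Z(1) by auto
  have W_avoids: "x \<notin> Z k" if "x \<in> W N" "N \<le> k" for x N k
    using that unfolding W_def
    by (metis (no_types, lifting) DiffD2 UN_iff UNIV_I le_add_diff_inverse2)
  have "incseq W"
  proof (rule monoI, rule subsetI)
    fix N N' x assume N: "N \<le> N'" and x: "x \<in> W N"
    have "x \<notin> Z (k + N')" for k by (rule W_avoids[OF x]) (use N in linarith)
    moreover have "x \<in> space M" using x unfolding W_def by blast
    ultimately show "x \<in> W N'" unfolding W_def by blast
  qed
  have complement: "space M - W N = (\<Union>k. Z (k + N))" for N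
    unfolding W_def using Z(1) sets.sets_into_space by blast
  have small: "prob (space M - W N) \<le> 2 * (1/2) ^ N" for N
    unfolding complement using prob_UN_tail_le[OF Z(1,2)] .
  have "prob (W 2) \<ge> 1/2"
    using prob_compl[OF W_sets[of 2]] small[of 2] by (simp add: power2_eq_square)
  then have "W 2 \<noteq> {}" by (intro notI) simp
  moreover have "stabilizing_partitions M r t W"
  proof (unfold_locales)
    show "same_atom (t k) x y \<longleftrightarrow> same_atom (t N) x y"
      if "N \<le> k" "x \<in> W N" "y \<in> W N" for N k x y
      using that(1)
    proof (induction k rule: dec_induct)
      case (step k)
      then show ?case using Z(3)[of x k y] W_avoids that(2,3) W_sets sets.sets_into_space by blast
    qed simp
  qed (use t W_sets \<open>incseq W\<close> in auto)
  ultimately have "\<exists>\<beta>\<in>parts M r. \<forall>N. \<forall>x\<in>W N. \<forall>y\<in>W N. same_atom \<beta> x y \<longleftrightarrow> same_atom (t N) x y"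
    using stabilizing_partitions.exists_limit by blast
  then obtain \<beta> where \<beta>: "\<beta> \<in> parts M r"
    "\<forall>N. \<forall>x\<in>W N. \<forall>y\<in>W N. same_atom \<beta> x y \<longleftrightarrow> same_atom (t N) x y"
    by blast
  have "agree_mod M (t N) \<beta> (2 * (1/2) ^ N)" for N
    unfolding agree_mod_def using \<beta>(2) small[of N] W_sets[of N]
    by (intro bexI[of _ "space M - W N"]) auto
  then show ?thesis using \<beta>(1) by blast
qed

end

section \<open>Sequences of bounded mean complexity have Cauchy subsequences\<close>

lemma ramsey_homogeneous_subseq:
  fixes close :: "nat \<Rightarrow> nat \<Rightarrow> bool"
  assumes refl: "\<And>i. close i i" and sym: "\<And>i j. close i j \<Longrightarrow> close j i"
    and no_separated: "\<And>g :: nat \<Rightarrow> nat. strict_mono g \<Longrightarrow> \<exists>i j. i \<noteq> j \<and> close (g i) (g j)"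
  shows "\<exists>g :: nat \<Rightarrow> nat. strict_mono g \<and> (\<forall>i j. close (g i) (g j))"
proof -
  define colour where "colour P = (if \<forall>i\<in>P. \<forall>j\<in>P. close i j then 0 else 1 :: nat)" for P
  have "\<exists>Y c. Y \<subseteq> UNIV \<and> infinite Y \<and> c < 2 \<and> (\<forall>i\<in>Y. \<forall>j\<in>Y. i \<noteq> j \<longrightarrow> colour {i, j} = c)"
    by (rule Ramsey2) (auto simp: colour_def)
  then obtain Y c where Y: "infinite Y" "c < 2" "\<forall>i\<in>Y. \<forall>j\<in>Y. i \<noteq> j \<longrightarrow> colour {i, j} = c"
    by blast
  define g where "g = enumerate Y"
  have g: "strict_mono g" "g n \<in> Y" for n
    unfolding g_def using Y(1) by (auto intro: strict_mono_enumerate enumerate_in_set)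
  have colour_close: "colour {i, j} = 0 \<longleftrightarrow> close i j" for i j
    unfolding colour_def using refl sym by auto
  have homogeneous: "colour {g i, g j} = c" if "i \<noteq> j" for i j
    using Y(3) g(2) strict_mono_eq[OF g(1)] that by auto
  obtain i j where "i \<noteq> j" "close (g i) (g j)" using no_separated[of g] g(1) by blast
  then have "c = 0" using homogeneous colour_close by metis
  then have "close (g i) (g j)" for i j using homogeneous colour_close refl by (cases "i = j") auto
  then show ?thesis using g(1) by blast
qed

context prob_space
begin

lemma exists_Cauchy_subseq:
  fixes s :: "nat \<Rightarrow> 'a set set"
  assumes K: "K \<subseteq> parts M r" and s: "\<And>n. s n \<in> K"
    and bmc: "\<And>u. (\<forall>n. u n \<in> K) \<Longrightarrow> seq_bounded_mean_complexity M u"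
  shows "\<exists>\<phi>. strict_mono \<phi> \<and> (\<forall>k. agree_mod M (s (\<phi> k)) (s (\<phi> (Suc k))) ((1/2) ^ k))"
proof -
  interpret subseqs "\<lambda>k f. \<forall>i j. agree_mod M (s (f i)) (s (f j)) ((1/2) ^ k)"
  proof
    fix k and f :: "nat \<Rightarrow> nat" assume "strict_mono f"
    let ?close = "\<lambda>a b. agree_mod M (s (f a)) (s (f b)) ((1/2) ^ k)"
    have "\<exists>g :: nat \<Rightarrow> nat. strict_mono g \<and> (\<forall>i j. ?close (g i) (g j))"
    proof (rule ramsey_homogeneous_subseq)
      fix g :: "nat \<Rightarrow> nat"
      show "\<exists>i j. i \<noteq> j \<and> agree_mod M (s (f (g i))) (s (f (g j))) ((1/2) ^ k)"
      proof (rule exists_agreeing_terms)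
        show "seq_bounded_mean_complexity M (\<lambda>n. s (f (g n)))" by (rule bmc) (use s in blast)
      qed (use s K in auto)
    qed (auto intro: agree_mod_refl agree_mod_sym)
    then show "\<exists>g :: nat \<Rightarrow> nat. strict_mono g \<and>
        (\<forall>i j. agree_mod M (s ((f \<circ> g) i)) (s ((f \<circ> g) j)) ((1/2) ^ k))"
      by simp
  qed
  have "strict_mono (diagseq \<circ> Suc)"
    using subseq_diagseq by (simp add: strict_mono_Suc_iff diagseq_mono)
  moreover have "agree_mod M (s (diagseq (Suc k))) (s (diagseq (Suc (Suc k)))) ((1/2) ^ k)" for k
  proof -
    let ?d = "diagseq \<circ> (+) (Suc k)"
    have "\<forall>i j. agree_mod M (s (?d i)) (s (?d j)) ((1/2) ^ k)" by (rule diagseq_holds) simp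
    from this[rule_format, of 0 1] show ?thesis by simp
  qed
  ultimately show ?thesis by (intro exI[of _ "diagseq \<circ> Suc"]) simp
qed

lemma precompact_parts_if_seq_bounded_mean_complexity:
  assumes K: "K \<subseteq> parts M r"
    and bmc: "\<And>s. (\<forall>n. s n \<in> K) \<Longrightarrow> seq_bounded_mean_complexity M s"
  shows "precompact_parts M r K"
  unfolding precompact_parts_def
proof (intro allI impI)
  fix s :: "nat \<Rightarrow> 'a set set" assume "\<forall>n. s n \<in> K"
  then obtain \<phi> where \<phi>: "strict_mono \<phi>" "\<And>k. agree_mod M (s (\<phi> k)) (s (\<phi> (Suc k))) ((1/2) ^ k)"
    using exists_Cauchy_subseq[OF K _ bmc] by blast
  have parts: "s (\<phi> k) \<in> parts M r" for k using \<open>\<forall>n. s n \<in> K\<close> K by blast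
  obtain \<beta> where \<beta>: "\<beta> \<in> parts M r" "\<And>N. agree_mod M (s (\<phi> N)) \<beta> (2 * (1/2) ^ N)"
    using agree_mod_Cauchy_limit[of "\<lambda>k. s (\<phi> k)", OF parts \<phi>(2)] by blast
  have "(\<lambda>N. 2 * (1/2) ^ N :: real) \<longlonglongrightarrow> 2 * 0" by (intro tendsto_intros) simp
  then have "(\<lambda>n. rokhlin M (s (\<phi> n)) \<beta>) \<longlonglongrightarrow> 0"
    using rokhlin_tendsto_0_if_agree_mod[OF parts \<beta>] by simp
  then show "\<exists>\<phi> \<beta>. strict_mono \<phi> \<and> \<beta> \<in> parts M r \<and> (\<lambda>n. rokhlin M (s (\<phi> n)) \<beta>) \<longlonglongrightarrow> 0"
    using \<phi>(1) \<beta>(1) by blast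
qed

end

theorem proposition3p4:
  fixes M :: "'a::polish_space measure" and r :: nat and K :: "'a set set set"
  assumes "standard_prob_space M" and "r \<ge> 2" and "K \<subseteq> parts M r"
  shows "(precompact_parts M r K \<longleftrightarrow> bounded_mean_complexity M K)
       \<and> (bounded_mean_complexity M K \<longleftrightarrow>
            (\<forall>s::nat \<Rightarrow> 'a set set. (\<forall>n. s n \<in> K) \<longrightarrow> seq_bounded_mean_complexity M s))"
proof -
  interpret prob_space M using assms(1) unfolding standard_prob_space_def by blast
  have "precompact_parts M r K \<Longrightarrow> bounded_mean_complexity M K"
    using bounded_mean_complexity_if_precompact_parts assms(3) by blast
  moreover have "bounded_mean_complexity M K \<Longrightarrow> seq_bounded_mean_complexity M s"
    if "\<forall>n. s n \<in> K" for s
    using seq_bounded_mean_complexity_if_bounded that by blast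
  moreover have "(\<forall>s. (\<forall>n. s n \<in> K) \<longrightarrow> seq_bounded_mean_complexity M s) \<Longrightarrow> precompact_parts M r K"
    using precompact_parts_if_seq_bounded_mean_complexity assms(3) by blast
  ultimately show ?thesis by blast
qed

end
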